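(* Let $\textsc{mix}$ be a nice mixture with parameter space $\mathcal{W}\subset\mathbb{R}^m$ and constant $a>0$ (as in the context). Let $b>1$ and set the step size $\alpha = 2(1-b^{-1})/a$. Then for every $n\ge 1$, every sequence $x^n=x_1\dots x_n$ over $\mathcal{X}$, every sequence $\mathbf{P}^n=\mathbf{P}_1,\dots,\mathbf{P}_n$ of probability matrices over $\mathcal{P}_+$ and every initial weight vector $\mathbf{w}_1\in\mathcal{W}$, $$\ell(x^n,\textsc{mix-ogd}(\mathbf{w}_1,\alpha,x^n,\mathbf{P}^n)) \le b\cdot \ell^*(x^n,\mathbf{P}^n,\textsc{mix}) + \frac{a}{4}\,\frac{b^2}{b-1}\,\lvert \mathbf{w}_1-\mathbf{w}^*\rvert^2,$$ where $\mathbf{w}^*\in\mathcal{W}$ is a minimizer of $\mathbf{w}\mapsto \ell(x^n,\mathbf{P}^n,\mathbf{w},\textsc{mix})$ over $\mathcal{W}$.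
   Context: Let $\mathcal{X}=\{1,\dots,N\}$ with $1<N<\infty$, and let $\mathcal{P}_+$ be the set of probability distributions on $\mathcal{X}$ assigning positive probability to every letter. Fix $m>1$. A probability matrix over $\mathcal{P}_+$ is $\mathbf{P}=(\mathbf{p}(1)\ \cdots\ \mathbf{p}(N))$ where $p_1,\dots,p_m\in\mathcal{P}_+$ and $\mathbf{p}(x)=(p_1(x),\dots,p_m(x))^{\mathsf T}$. For $p\in\mathcal{P}_+$ and $x\in\mathcal{X}$, $\ell(x,p):=-\log_2 p(x)$. A mixture $\textsc{mix}$ with parameter space $\mathcal{W}\subseteq\mathbb{R}^m$ maps $(\mathbf{w},\mathbf{P})$ with $\mathbf{w}\in\mathcal{W}$ to a distribution $\textsc{mix}(\mathbf{w},\mathbf{P})\in\mathcal{P}_+$. It is called nice if: (1) $\mathcal{W}$ is a non-empty, compact, convex subset of $\mathbb{R}^m$; (2) $\mathbf{w}\mapsto\ell(x,\textsc{mix}(\mathbf{w},\mathbf{P}))$ is convex on $\mathcal{W}$ for all $\mathbf{P}$ over $\mathcal{P}_+$ and all $x\in\mathcal{X}$; (3) it is differentiable in $\mathbf{w}$ for all such $\mathbf{P},x$; (4) there is a constant $a>0$ with $\lvert\nabla_{\mathbf{w}}\ell(x,\textsc{mix}(\mathbf{w},\mathbf{P}))\rvert^2\le a\,\ell(x,\textsc{mix}(\mathbf{w},\mathbf{P}))$ for all $\mathbf{w}\in\mathcal{W}$, all $\mathbf{P}$ over $\mathcal{P}_+$ and all $x\in\mathcal{X}$ ($\lvert\cdot\rvert$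 is the Euclidean norm). Algorithm $\textsc{mix-ogd}(\mathbf{w}_1,\alpha,x^n,\mathbf{P}^n)$: given $\mathbf{w}_1\in\mathcal{W}$, for $k=1,\dots,n$ it codes $x_k$ with $\ell(x_k,\textsc{mix}(\mathbf{w}_k,\mathbf{P}_k))$ bits and sets $\mathbf{w}_{k+1}=\mathrm{proj}\big(\mathbf{w}_k-\alpha\nabla_{\mathbf{w}}\ell(x_k,\textsc{mix}(\mathbf{w},\mathbf{P}_k))|_{\mathbf{w}=\mathbf{w}_k};\mathcal{W}\big)$, where $\mathrm{proj}(\mathbf{v};\mathcal{W})=\arg\min_{\mathbf{w}\in\mathcal{W}}\lvert\mathbf{v}-\mathbf{w}\rvert^2$. Its total code length is $\ell(x^n,\textsc{mix-ogd}(\mathbf{w}_1,\alpha,x^n,\mathbf{P}^n)):=\sum_{k=1}^n\ell(x_k,\textsc{mix}(\mathbf{w}_k,\mathbf{P}_k))$. Also $\ell(x^n,\mathbf{P}^n,\mathbf{w},\textsc{mix}):=\sum_{k=1}^n\ell(x_k,\textsc{mix}(\mathbf{w},\mathbf{P}_k))$ and $\ell^*(x^n,\mathbf{P}^n,\textsc{mix}):=\min_{\mathbf{w}\in\mathcal{W}}\ell(x^n,\mathbf{P}^n,\mathbf{w},\textsc{mix})$. *)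

theory Defs
  imports "HOL-Analysis.Analysis"
begin

definition Pplus :: "nat \<Rightarrow> (nat \<Rightarrow> real) \<Rightarrow> bool" where
  "Pplus N p \<longleftrightarrow> (\<forall>x\<in>{1..N}. p x > 0) \<and> (\<Sum>x=1..N. p x) = 1"

text \<open>A probability matrix over P_+: one distribution p_i per model index i (the m rows).\<close>
definition prob_matrix :: "nat \<Rightarrow> ('m \<Rightarrow> nat \<Rightarrow> real) \<Rightarrow> bool" where
  "prob_matrix N P \<longleftrightarrow> (\<forall>i. Pplus N (P i))"

definition ell :: "nat \<Rightarrow> (nat \<Rightarrow> real) \<Rightarrow> real" where
  "ell x p = - log 2 (p x)"

definition grad :: "(real^'m \<Rightarrow> real) \<Rightarrow> real^'m \<Rightarrow> real^'m" where
  "grad f w = (THE g. (f has_derivative (\<lambda>h. g \<bullet> h)) (at w))"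

definition proj :: "real^'m \<Rightarrow> (real^'m) set \<Rightarrow> real^'m" where
  "proj v W = (SOME w. w \<in> W \<and> (\<forall>u\<in>W. (norm (v - w))\<^sup>2 \<le> (norm (v - u))\<^sup>2))"

definition nice_mixture ::
  "nat \<Rightarrow> (real^'m) set \<Rightarrow> (real^'m \<Rightarrow> ('m \<Rightarrow> nat \<Rightarrow> real) \<Rightarrow> (nat \<Rightarrow> real)) \<Rightarrow> real \<Rightarrow> bool" where
  "nice_mixture N W mix a \<longleftrightarrow>
     W \<noteq> {} \<and> compact W \<and> convex W \<and> a > 0 \<and>
     (\<forall>P. prob_matrix N P \<longrightarrow>
        (\<forall>w\<in>W. Pplus N (mix w P)) \<and>
        (\<forall>x\<in>{1..N}.
           convex_on W (\<lambda>w. ell x (mix w P)) \<and>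
           (\<forall>w\<in>W. (\<lambda>w. ell x (mix w P)) differentiable (at w)) \<and>
           (\<forall>w\<in>W. (norm (grad (\<lambda>w. ell x (mix w P)) w))\<^sup>2 \<le> a * ell x (mix w P))))"

text \<open>ogd_w ... k is the weight vector w_{k+1} (so ogd_w ... 0 = w_1).\<close>
primrec ogd_w ::
  "(real^'m) set \<Rightarrow> (real^'m \<Rightarrow> ('m \<Rightarrow> nat \<Rightarrow> real) \<Rightarrow> (nat \<Rightarrow> real)) \<Rightarrow> real^'m \<Rightarrow> real
   \<Rightarrow> (nat \<Rightarrow> nat) \<Rightarrow> (nat \<Rightarrow> 'm \<Rightarrow> nat \<Rightarrow> real) \<Rightarrow> nat \<Rightarrow> real^'m" where
  "ogd_w W mix w1 \<alpha> xs Ps 0 = w1"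
| "ogd_w W mix w1 \<alpha> xs Ps (Suc k) =
     proj (ogd_w W mix w1 \<alpha> xs Ps k
           - \<alpha> *\<^sub>R grad (\<lambda>w. ell (xs (Suc k)) (mix w (Ps (Suc k)))) (ogd_w W mix w1 \<alpha> xs Ps k)) W"

definition mix_ogd_len where
  "mix_ogd_len W mix w1 \<alpha> n xs Ps =
     (\<Sum>k=1..n. ell (xs k) (mix (ogd_w W mix w1 \<alpha> xs Ps (k - 1)) (Ps k)))"

definition mix_len where
  "mix_len n xs Ps w mix = (\<Sum>k=1..n. ell (xs k) (mix w (Ps k)))"

definition mix_len_star where
  "mix_len_star W n xs Ps mix = (INF w\<in>W. mix_len n xs Ps w mix)"

end

theory Submission imports Defs begin

text \<open>A projected gradient step towards a comparator \<open>u \<in> W\<close> shrinks \<open>\<parallel>w - u\<parallel>\<^sup>2\<close> by at least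
  \<open>2\<alpha> (\<ell>(w) - \<ell>(u)) - \<alpha>\<^sup>2 \<parallel>\<nabla>\<ell>(w)\<parallel>\<^sup>2\<close> (convexity plus non-expansiveness of the projection).
  Telescoping and the self-bounding property \<open>\<parallel>\<nabla>\<ell>\<parallel>\<^sup>2 \<le> a \<ell>\<close> give
  \<open>(2\<alpha> - a\<alpha>\<^sup>2) L \<le> 2\<alpha> L\<^sup>* + \<parallel>w\<^sub>1 - u\<parallel>\<^sup>2\<close> for the total code lengths, and the step size
  \<open>\<alpha> = 2 (1 - 1/b) / a\<close> is chosen so that \<open>2\<alpha> - a\<alpha>\<^sup>2 = 2\<alpha>/b\<close>.\<close>

lemma proj_eq_closest_point: "proj v W = closest_point W v"
  unfolding proj_def closest_point_def by (simp add: dist_norm)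

lemma proj_in:
  assumes "closed W" "W \<noteq> {}"
  shows "proj v W \<in> W"
  using closest_point_in_set[OF assms] by (simp add: proj_eq_closest_point)

lemma proj_dist_le:
  assumes "closed W" "convex W" "W \<noteq> {}" "u \<in> W"
  shows "norm (proj v W - u) \<le> norm (v - u)"
  using closest_point_lipschitz[OF assms(2,1,3), of v u] closest_point_self[OF assms(4)]
  by (simp add: proj_eq_closest_point dist_norm)

lemma grad_eq:
  assumes "(f has_derivative (\<lambda>h. g \<bullet> h)) (at w)"
  shows "grad f w = g"
  unfolding grad_def
proof (rule the_equality)
  fix g' assume "(f has_derivative (\<lambda>h. g' \<bullet> h)) (at w)"
  from this assms have "(\<lambda>h. g' \<bullet> h) = (\<lambda>h. g \<bullet> h)"
    by (rule has_derivative_unique)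
  then show "g' = g" by (metis vector_eq_rdot)
qed (fact assms)

lemma has_derivative_grad:
  assumes "f differentiable (at w)"
  shows "(f has_derivative (\<lambda>h. grad f w \<bullet> h)) (at w)"
proof -
  obtain f' where f': "(f has_derivative f') (at w)"
    using assms unfolding differentiable_def by blast
  have "f' = (\<lambda>h. h \<bullet> adjoint f' 1)"
    using adjoint_works[OF has_derivative_linear[OF f'], of _ 1] by auto
  with f' have "(f has_derivative (\<lambda>h. adjoint f' 1 \<bullet> h)) (at w)"
    by (simp add: inner_commute)
  then show ?thesis by (simp add: grad_eq)
qed

text \<open>Along the segment from \<open>w\<close> to \<open>u\<close> the difference quotients of \<open>f\<close> are bounded by
  \<open>f u - f w\<close> and tend to \<open>f' (u - w)\<close>.\<close>
lemma convex_on_has_derivative_le: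
  fixes f :: "'a::real_normed_vector \<Rightarrow> real"
  assumes cvx: "convex_on W f" and "w \<in> W" "u \<in> W"
    and f': "(f has_derivative f') (at w)"
  shows "f w + f' (u - w) \<le> f u"
proof -
  define \<phi> where "\<phi> t = f (w + t *\<^sub>R (u - w))" for t :: real
  have "((\<lambda>t. w + t *\<^sub>R (u - w)) has_derivative (\<lambda>t. t *\<^sub>R (u - w))) (at 0)"
    by (auto intro!: derivative_eq_intros)
  from diff_chain_at[OF this] f'
  have "(\<phi> has_derivative (\<lambda>t. f' (t *\<^sub>R (u - w)))) (at 0)"
    by (simp add: \<phi>_def[abs_def] o_def)
  moreover have "(\<lambda>t. f' (t *\<^sub>R (u - w))) = (*) (f' (u - w))"
    using linear_scale[OF has_derivative_linear[OF f']] by (auto simp: mult.commute)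
  ultimately have "(\<phi> has_field_derivative f' (u - w)) (at 0 within {0<..})"
    unfolding has_field_derivative_def by (simp add: has_derivative_at_withinI)
  then have lim: "((\<lambda>t. (\<phi> t - \<phi> 0) / (t - 0)) \<longlongrightarrow> f' (u - w)) (at_right 0)"
    unfolding has_field_derivative_iff .
  have "eventually (\<lambda>t. (\<phi> t - \<phi> 0) / (t - 0) \<le> f u - f w) (at_right 0)"
    using eventually_at_right_real[OF zero_less_one]
  proof eventually_elim
    case (elim t)
    have "w + t *\<^sub>R (u - w) = (1 - t) *\<^sub>R w + t *\<^sub>R u" by (simp add: algebra_simps)
    then have "\<phi> t \<le> (1 - t) * f w + t * f u"
      using convex_onD[OF cvx, of t w u] elim \<open>w \<in> W\<close> \<open>u \<in> W\<close> by (simp add: \<phi>_def)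
    then show ?case using elim by (simp add: \<phi>_def field_simps)
  qed
  with lim have "f' (u - w) \<le> f u - f w"
    by (simp add: tendsto_upperbound)
  then show ?thesis by simp
qed

lemma convex_on_grad_le:
  assumes "convex_on W f" "w \<in> W" "u \<in> W" "f differentiable (at w)"
  shows "f w + grad f w \<bullet> (u - w) \<le> f u"
  using convex_on_has_derivative_le[OF assms(1-3) has_derivative_grad[OF assms(4)]] .

lemma norm_diff_scaleR_squared:
  "(norm (x - c *\<^sub>R g))\<^sup>2 = (norm x)\<^sup>2 - 2 * c * (g \<bullet> x) + c\<^sup>2 * (norm g)\<^sup>2"
  unfolding power2_norm_eq_inner
  by (simp add: inner_diff_left inner_diff_right inner_commute power2_eq_square algebra_simps)

lemma proj_gradient_step_le:
  fixes f :: "real^'m \<Rightarrow> real"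
  assumes W: "closed W" "convex W" "W \<noteq> {}"
    and "convex_on W f" "v \<in> W" "u \<in> W" "f differentiable (at v)" "\<alpha> \<ge> 0"
  shows "2 * \<alpha> * (f v - f u)
    \<le> (norm (v - u))\<^sup>2 - (norm (proj (v - \<alpha> *\<^sub>R grad f v) W - u))\<^sup>2 + \<alpha>\<^sup>2 * (norm (grad f v))\<^sup>2"
proof -
  let ?g = "grad f v"
  have shift: "(v - u) - \<alpha> *\<^sub>R ?g = (v - \<alpha> *\<^sub>R ?g) - u"
    by (simp add: algebra_simps)
  have "norm (proj (v - \<alpha> *\<^sub>R ?g) W - u) \<le> norm ((v - u) - \<alpha> *\<^sub>R ?g)"
    unfolding shift by (rule proj_dist_le[OF W \<open>u \<in> W\<close>])
  then have "(norm (proj (v - \<alpha> *\<^sub>R ?g) W - u))\<^sup>2 \<le> (norm ((v - u) - \<alpha> *\<^sub>R ?g))\<^sup>2"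
    by (rule power_mono) simp
  also have "\<dots> = (norm (v - u))\<^sup>2 - 2 * \<alpha> * (?g \<bullet> (v - u)) + \<alpha>\<^sup>2 * (norm ?g)\<^sup>2"
    by (rule norm_diff_scaleR_squared)
  finally have dist: "(norm (proj (v - \<alpha> *\<^sub>R ?g) W - u))\<^sup>2
      \<le> (norm (v - u))\<^sup>2 - 2 * \<alpha> * (?g \<bullet> (v - u)) + \<alpha>\<^sup>2 * (norm ?g)\<^sup>2" .
  have "f v - f u \<le> ?g \<bullet> (v - u)"
    using convex_on_grad_le[OF assms(4-7)] by (simp add: inner_diff_right)
  then have "2 * \<alpha> * (f v - f u) \<le> 2 * \<alpha> * (?g \<bullet> (v - u))"
    by (rule mult_left_mono) (simp add: \<open>\<alpha> \<ge> 0\<close>)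
  with dist show ?thesis by linarith
qed

lemma ogd_w_in:
  assumes "closed W" "W \<noteq> {}" "w1 \<in> W"
  shows "ogd_w W mix w1 \<alpha> xs Ps k \<in> W"
  by (cases k) (simp_all add: assms proj_in)

lemma proj_gradient_descent_regret:
  fixes f :: "nat \<Rightarrow> real^'m \<Rightarrow> real"
  assumes W: "closed W" "convex W" "W \<noteq> {}" and "u \<in> W" "\<alpha> \<ge> 0"
    and v_in: "\<And>j. v j \<in> W"
    and step: "\<And>j. v (Suc j) = proj (v j - \<alpha> *\<^sub>R grad (f j) (v j)) W"
    and cvx: "\<And>j. j < n \<Longrightarrow> convex_on W (f j)"
    and diff: "\<And>j. j < n \<Longrightarrow> f j differentiable (at (v j))"
  shows "2 * \<alpha> * (\<Sum>j<n. f j (v j) - f j u)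
    \<le> (norm (v 0 - u))\<^sup>2 + \<alpha>\<^sup>2 * (\<Sum>j<n. (norm (grad (f j) (v j)))\<^sup>2)"
proof -
  have "2 * \<alpha> * (\<Sum>j<n. f j (v j) - f j u)
      \<le> (\<Sum>j<n. (norm (v j - u))\<^sup>2 - (norm (v (Suc j) - u))\<^sup>2 + \<alpha>\<^sup>2 * (norm (grad (f j) (v j)))\<^sup>2)"
    unfolding sum_distrib_left step
    by (intro sum_mono proj_gradient_step_le[OF W] cvx diff v_in \<open>u \<in> W\<close> \<open>\<alpha> \<ge> 0\<close>) simp_all
  also have "\<dots> = (norm (v 0 - u))\<^sup>2 - (norm (v n - u))\<^sup>2 + \<alpha>\<^sup>2 * (\<Sum>j<n. (norm (grad (f j) (v j)))\<^sup>2)"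
    by (simp add: sum.distrib sum_distrib_left sum_lessThan_telescope'[of "\<lambda>j. (norm (v j - u))\<^sup>2"])
  finally show ?thesis
    using zero_le_power2[of "norm (v n - u)"] by linarith
qed

lemma self_bounded_regret_rescale:
  fixes a b L L' D :: real
  assumes \<alpha>: "\<alpha> = 2 * (1 - 1 / b) / a" and "a > 0" "b > 1"
    and regret: "2 * \<alpha> * (L - L') \<le> D + \<alpha>\<^sup>2 * a * L"
  shows "L \<le> b * L' + a / 4 * (b\<^sup>2 / (b - 1)) * D"
proof -
  have "\<alpha> > 0"
    using assms(2,3) by (simp add: \<alpha> field_simps)
  have "2 * \<alpha> - \<alpha>\<^sup>2 * a = 2 * \<alpha> / b"
    using assms(2,3) by (simp add: \<alpha> power2_eq_square field_simps)
  moreover have "(2 * \<alpha> - \<alpha>\<^sup>2 * a) * L \<le> 2 * \<alpha> * L' + D"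
    using regret by (simp add: algebra_simps)
  ultimately have scaled: "2 * \<alpha> / b * L \<le> 2 * \<alpha> * L' + D"
    by simp
  have "L = b / (2 * \<alpha>) * (2 * \<alpha> / b * L)"
    using \<open>\<alpha> > 0\<close> assms(3) by simp
  also have "\<dots> \<le> b / (2 * \<alpha>) * (2 * \<alpha> * L' + D)"
    using scaled \<open>\<alpha> > 0\<close> assms(3) by (intro mult_left_mono) auto
  also have "\<dots> = b * L' + b / (2 * \<alpha>) * D"
    using \<open>\<alpha> > 0\<close> by (simp add: distrib_left)
  also have "b / (2 * \<alpha>) = a / 4 * (b\<^sup>2 / (b - 1))"
    using assms(2,3) by (simp add: \<alpha> power2_eq_square field_simps)
  finally show ?thesis .
qed

lemma mix_len_star_eq_minimum:
  assumes "wstar \<in> W" "\<forall>w\<in>W. mix_len n xs Ps wstar mix \<le> mix_len n xs Ps w mix"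
  shows "mix_len_star W n xs Ps mix = mix_len n xs Ps wstar mix"
  unfolding mix_len_star_def using assms by (intro cInf_eq_minimum) auto

lemma mix_ogd_self_bounded_regret:
  assumes nice: "nice_mixture N W mix a"
    and xs: "\<forall>k\<in>{1..n}. xs k \<in> {1..N}" and Ps: "\<forall>k\<in>{1..n}. prob_matrix N (Ps k)"
    and "w1 \<in> W" "u \<in> W" "\<alpha> \<ge> 0"
  shows "2 * \<alpha> * (mix_ogd_len W mix w1 \<alpha> n xs Ps - mix_len n xs Ps u mix)
    \<le> (norm (w1 - u))\<^sup>2 + \<alpha>\<^sup>2 * a * mix_ogd_len W mix w1 \<alpha> n xs Ps"
proof -
  define v where "v = ogd_w W mix w1 \<alpha> xs Ps"
  define f where "f j w = ell (xs (Suc j)) (mix w (Ps (Suc j)))" for j w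
  have W: "closed W" "convex W" "W \<noteq> {}"
    using nice compact_imp_closed unfolding nice_mixture_def by auto
  have v_in: "v j \<in> W" for j
    unfolding v_def using ogd_w_in[OF W(1,3) \<open>w1 \<in> W\<close>] .
  have f_nice: "convex_on W (f j) \<and> (\<forall>w\<in>W. f j differentiable (at w)
      \<and> (norm (grad (f j) w))\<^sup>2 \<le> a * f j w)" if "j < n" for j
    using nice xs Ps that unfolding nice_mixture_def f_def[abs_def] by auto
  have step: "v (Suc j) = proj (v j - \<alpha> *\<^sub>R grad (f j) (v j)) W" for j
    by (simp add: v_def f_def[abs_def])
  have ogd_len: "mix_ogd_len W mix w1 \<alpha> n xs Ps = (\<Sum>j<n. f j (v j))"
    by (simp add: mix_ogd_len_def f_def v_def sum.atLeast1_atMost_eq)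
  have len_u: "mix_len n xs Ps u mix = (\<Sum>j<n. f j u)"
    by (simp add: mix_len_def f_def sum.atLeast1_atMost_eq)
  have regret: "2 * \<alpha> * (\<Sum>j<n. f j (v j) - f j u)
      \<le> (norm (v 0 - u))\<^sup>2 + \<alpha>\<^sup>2 * (\<Sum>j<n. (norm (grad (f j) (v j)))\<^sup>2)"
    by (rule proj_gradient_descent_regret[where f = f and v = v, OF W \<open>u \<in> W\<close> \<open>\<alpha> \<ge> 0\<close> v_in step])
       (use f_nice v_in in simp_all)
  have "(\<Sum>j<n. (norm (grad (f j) (v j)))\<^sup>2) \<le> a * (\<Sum>j<n. f j (v j))"
    unfolding sum_distrib_left by (rule sum_mono) (use f_nice v_in in blast)
  from mult_left_mono[OF this, of "\<alpha>\<^sup>2"] regret show ?thesis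
    by (simp add: ogd_len len_u sum_subtractf v_def mult.assoc)
qed

theorem proposition1:
  fixes N :: nat and W :: "(real^'m) set"
    and mix :: "real^'m \<Rightarrow> ('m \<Rightarrow> nat \<Rightarrow> real) \<Rightarrow> (nat \<Rightarrow> real)"
    and a b :: real and n :: nat and xs :: "nat \<Rightarrow> nat"
    and Ps :: "nat \<Rightarrow> 'm \<Rightarrow> nat \<Rightarrow> real" and w1 wstar :: "real^'m"
  assumes "1 < N" and "1 < CARD('m)"
    and "nice_mixture N W mix a"
    and "b > 1"
    and "n \<ge> 1"
    and "\<forall>k\<in>{1..n}. xs k \<in> {1..N}"
    and "\<forall>k\<in>{1..n}. prob_matrix N (Ps k)"
    and "w1 \<in> W"
    and "wstar \<in> W" and "\<forall>w\<in>W. mix_len n xs Ps wstar mix \<le> mix_len n xs Ps w mix"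
  shows "mix_ogd_len W mix w1 (2 * (1 - 1 / b) / a) n xs Ps
           \<le> b * mix_len_star W n xs Ps mix + a / 4 * (b\<^sup>2 / (b - 1)) * (norm (w1 - wstar))\<^sup>2"
proof -
  have "a > 0"
    using assms(3) unfolding nice_mixture_def by simp
  then have "2 * (1 - 1 / b) / a \<ge> 0"
    using \<open>b > 1\<close> by (simp add: field_simps)
  from mix_ogd_self_bounded_regret[OF assms(3,6,7,8,9) this]
  show ?thesis
    unfolding mix_len_star_eq_minimum[OF assms(9,10)]
    by (rule self_bounded_regret_rescale[OF refl \<open>a > 0\<close> \<open>b > 1\<close>])
qed

end
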